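(* Let $\mathbf{X}$ and $\mathbf{Y}$ be two-dimensional random vectors with $\mathbf{X}\succ_{d}\mathbf{Y}$. Then for every $u\in\mathcal{U}$ satisfying $\frac{\partial^2 u(x_1,x_2)}{\partial x_1\partial x_2}\le 0$ (everywhere), $\mathbb{E}\,u(\mathbf{X})>\mathbb{E}\,u(\mathbf{Y})$.
   Context: For $\mathbf{x},\mathbf{y}\in\mathbb{R}^2$ write $\mathbf{y}\preceq_p\mathbf{x}$ if $y_i\le x_i$ for all $i$, and $\mathbf{x}\succ_p\mathbf{y}$ (Pareto dominance) if $x_i\ge y_i$ for all $i$ and $x_i>y_i$ for some $i$. $\mathcal{U}$ is the class of strictly monotonically increasing functions $u:\mathbb{R}^2\to\mathbb{R}$, i.e. $\mathbf{x}\succ_p\mathbf{y}\implies u(\mathbf{x})>u(\mathbf{y})$. The CDF of a random vector is $F_{\mathbf{X}}(\mathbf{x})=P(\mathbf{X}\preceq_p\mathbf{x})$. $\mathbf{X}\succeq_{\mathrm{FSD}}\mathbf{Y}$ iff $F_{\mathbf{X}}(\mathbf{v})\le F_{\mathbf{Y}}(\mathbf{v})$ for all $\mathbf{v}$; $\mathbf{X}\succ_{\mathrm{FSD}}\mathbf{Y}$ iff additionally $F_{\mathbf{X}}(\mathbf{v})<F_{\mathbf{Y}}(\mathbf{v})$ for some $\mathbf{v}$ (same for real random variables). Distributional dominance $\mathbf{X}\succ_d\mathbf{Y}$: $\mathbf{X}\succeq_{\mathrm{FSD}}\mathbf{Y}$ and $X_i\succ_{\mathrm{FSD}}Y_i$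 for some marginal index $i$. All expectations appearing are assumed to exist. *)

theory Defs
  imports "HOL-Probability.Probability"
begin

definition pareto_dom :: "real \<times> real \<Rightarrow> real \<times> real \<Rightarrow> bool" where
  "pareto_dom x y \<longleftrightarrow> fst x \<ge> fst y \<and> snd x \<ge> snd y \<and> (fst x > fst y \<or> snd x > snd y)"

definition strictly_increasing2 :: "(real \<times> real \<Rightarrow> real) \<Rightarrow> bool" where
  "strictly_increasing2 u \<longleftrightarrow> (\<forall>x y. pareto_dom x y \<longrightarrow> u x > u y)"

definition cdf1 :: "'a measure \<Rightarrow> ('a \<Rightarrow> real) \<Rightarrow> real \<Rightarrow> real" where
  "cdf1 M X t = measure M {\<omega> \<in> space M. X \<omega> \<le> t}"

definition cdf2 :: "'a measure \<Rightarrow> ('a \<Rightarrow> real \<times> real) \<Rightarrow> real \<times> real \<Rightarrow> real" where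
  "cdf2 M X v = measure M {\<omega> \<in> space M. fst (X \<omega>) \<le> fst v \<and> snd (X \<omega>) \<le> snd v}"

definition fsd_weak1 :: "'a measure \<Rightarrow> ('a \<Rightarrow> real) \<Rightarrow> 'b measure \<Rightarrow> ('b \<Rightarrow> real) \<Rightarrow> bool" where
  "fsd_weak1 M X N Y \<longleftrightarrow> (\<forall>t. cdf1 M X t \<le> cdf1 N Y t)"

definition fsd_strict1 :: "'a measure \<Rightarrow> ('a \<Rightarrow> real) \<Rightarrow> 'b measure \<Rightarrow> ('b \<Rightarrow> real) \<Rightarrow> bool" where
  "fsd_strict1 M X N Y \<longleftrightarrow> fsd_weak1 M X N Y \<and> (\<exists>t. cdf1 M X t < cdf1 N Y t)"

definition fsd_weak2 :: "'a measure \<Rightarrow> ('a \<Rightarrow> real \<times> real) \<Rightarrow> 'b measure \<Rightarrow> ('b \<Rightarrow> real \<times> real) \<Rightarrow> bool" where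
  "fsd_weak2 M X N Y \<longleftrightarrow> (\<forall>v. cdf2 M X v \<le> cdf2 N Y v)"

definition dist_dom :: "'a measure \<Rightarrow> ('a \<Rightarrow> real \<times> real) \<Rightarrow> 'b measure \<Rightarrow> ('b \<Rightarrow> real \<times> real) \<Rightarrow> bool" where
  "dist_dom M X N Y \<longleftrightarrow> fsd_weak2 M X N Y \<and>
     (fsd_strict1 M (\<lambda>\<omega>. fst (X \<omega>)) N (\<lambda>\<omega>. fst (Y \<omega>)) \<or>
      fsd_strict1 M (\<lambda>\<omega>. snd (X \<omega>)) N (\<lambda>\<omega>. snd (Y \<omega>)))"

definition mixed_partial_nonpos :: "(real \<times> real \<Rightarrow> real) \<Rightarrow> bool" where
  "mixed_partial_nonpos u \<longleftrightarrow>
    (\<exists>u2 u12. (\<forall>x1 x2. ((\<lambda>t. u (x1, t)) has_real_derivative u2 x1 x2) (at x2)) \<and>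
              (\<forall>x1 x2. ((\<lambda>s. u2 s x2) has_real_derivative u12 x1 x2) (at x1)) \<and>
              (\<forall>x1 x2. u12 x1 x2 \<le> 0))"

end

theory Submission
  imports Defs
begin

(* Truncating u at a level n, the positive part (n - u)^+ splits as g(x1) plus the integral of
   k(x1, t) over t >= x2, where g(s) is the limit of (n - u(s, t))^+ as t -> oo and k is the
   partial derivative of u in x2, cut off where u reaches n. Both g and k(., t) are nonnegative
   and antitone in x1, the latter because the mixed partial derivative is nonpositive. By the
   layer cake formula, the expectation of h(x1) [x2 <= t] with h antitone only depends on the
   masses of products of down-closed sets, which lower orthant dominance F_X <= F_Y compares.
   Hence E (n - u(X))^+ <= E (n - u(Y))^+ for all n, and E u(X) >= E u(Y) in the limit.
   For strictness, a strict inequality between marginal CDFs leaves a uniform slack eta on the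
   orthants that contain a point p but not a point q Pareto-dominating p. The laws of X and Y can
   then be mixed with point masses at p and q without destroying dominance, and the weak
   inequality for the mixtures yields E u(X) - E u(Y) >= eta (u q - u p) > 0. *)

section \<open>Lower orthant dominance\<close>

definition down_closed :: "real set \<Rightarrow> bool" where
  "down_closed D \<longleftrightarrow> (\<forall>x\<in>D. \<forall>y\<le>x. y \<in> D)"

definition lower_orthant_dominates :: "(real \<times> real) measure \<Rightarrow> (real \<times> real) measure \<Rightarrow> bool" where
  "lower_orthant_dominates P Q \<longleftrightarrow>
    (\<forall>s t. emeasure P ({..s} \<times> {..t}) \<le> emeasure Q ({..s} \<times> {..t}))"

lemma down_closed_UNIV: "down_closed UNIV"
  by (simp add: down_closed_def)

lemma down_closed_atMost: "down_closed {..t}"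
  by (auto simp: down_closed_def)

lemma down_closed_cases:
  assumes "down_closed D"
  obtains "D = {}" | "D = UNIV" | a where "D = {..a}" | a where "D = {..<a}"
proof (cases "D = {} \<or> D = UNIV")
  case False
  then obtain x b where "x \<in> D" "b \<notin> D" by blast
  have "y < b" if "y \<in> D" for y
    using assms \<open>b \<notin> D\<close> that unfolding down_closed_def by (meson not_le_imp_less)
  then have bdd: "bdd_above D" by (meson bdd_aboveI less_imp_le)
  have "{..<Sup D} \<subseteq> D"
  proof
    fix y assume "y \<in> {..<Sup D}"
    then obtain z where "z \<in> D" "y < z" using less_cSup_iff[OF _ bdd] \<open>x \<in> D\<close> by auto
    then show "y \<in> D" using assms unfolding down_closed_def by auto
  qed
  moreover have "D \<subseteq> {..Sup D}" using cSup_upper[OF _ bdd] by auto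
  ultimately have "D = {..Sup D} \<or> D = {..<Sup D}"
    using assms unfolding down_closed_def by (cases "Sup D \<in> D") auto
  then show ?thesis using that by blast
qed (use that in blast)

lemma down_closed_eq_Union_atMost:
  assumes "down_closed D" "D \<noteq> {}"
  obtains d :: "nat \<Rightarrow> real" where "incseq d" "D = (\<Union>k. {..d k})"
  using assms(1)
proof (cases rule: down_closed_cases)
  case 1
  then show ?thesis using assms(2) by simp
next
  case 2
  have "incseq (\<lambda>k. real k)" by (simp add: incseq_def)
  moreover have "UNIV = (\<Union>k. {..real k})" using real_arch_simple by auto
  ultimately show ?thesis using that 2 by blast
next
  case (3 a)
  then show ?thesis using that[of "\<lambda>_. a"] by (simp add: incseq_def)
next
  case (4 a)
  have "incseq (\<lambda>k. a - 1 / Suc k)"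
    by (intro incseq_SucI) (simp add: frac_le)
  moreover have "{..<a} = (\<Union>k. {..a - 1 / Suc k})"
  proof (intro subset_antisym subsetI)
    fix x assume "x \<in> {..<a}"
    then obtain k where "inverse (real (Suc k)) < a - x" using reals_Archimedean[of "a - x"] by auto
    then have "x \<le> a - 1 / Suc k" by (simp add: inverse_eq_divide)
    then show "x \<in> (\<Union>k. {..a - 1 / Suc k})" by blast
  next
    fix x assume "x \<in> (\<Union>k. {..a - 1 / Suc k})"
    moreover have "a - 1 / Suc k < a" for k by simp
    ultimately show "x \<in> {..<a}" by (auto intro: le_less_trans)
  qed
  ultimately show ?thesis using that 4 by blast
qed

lemma lower_orthant_dominates_Times:
  assumes dom: "lower_orthant_dominates P Q"
    and sets: "sets P = sets borel" "sets Q = sets borel"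
    and D: "down_closed D1" "down_closed D2"
  shows "emeasure P (D1 \<times> D2) \<le> emeasure Q (D1 \<times> D2)"
proof (cases "D1 = {} \<or> D2 = {}")
  case False
  obtain d1 where d1: "incseq d1" "D1 = (\<Union>k. {..d1 k})"
    using down_closed_eq_Union_atMost[OF D(1)] False by blast
  obtain d2 where d2: "incseq d2" "D2 = (\<Union>k. {..d2 k})"
    using down_closed_eq_Union_atMost[OF D(2)] False by blast
  define A where "A k = {..d1 k} \<times> {..d2 k}" for k
  have "incseq A"
    using d1(1) d2(1) unfolding A_def incseq_def by (auto intro: order_trans)
  have "D1 \<times> D2 = (\<Union>k. A k)"
  proof (intro subset_antisym subsetI)
    fix x assume "x \<in> D1 \<times> D2"
    then obtain i j where "fst x \<le> d1 i" "snd x \<le> d2 j" using d1(2) d2(2) by auto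
    then have "fst x \<le> d1 (max i j)" "snd x \<le> d2 (max i j)"
      using d1(1) d2(1) by (meson incseq_def max.cobounded1 max.cobounded2 order_trans)+
    then show "x \<in> (\<Union>k. A k)" unfolding A_def by (auto simp: mem_Times_iff)
  qed (use d1(2) d2(2) in \<open>auto simp: A_def\<close>)
  moreover have "range A \<subseteq> sets borel"
    unfolding A_def by (auto intro: borel_closed closed_Times)
  ultimately have "emeasure M (D1 \<times> D2) = (SUP k. emeasure M (A k))" if "sets M = sets borel" for M
    using that \<open>incseq A\<close> by (simp add: SUP_emeasure_incseq)
  moreover have "(SUP k. emeasure P (A k)) \<le> (SUP k. emeasure Q (A k))"
    using dom unfolding lower_orthant_dominates_def A_def by (intro SUP_mono) auto
  ultimately show ?thesis using sets by simp
qed auto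

lemma nn_integral_layer_cake:
  assumes "sigma_finite_measure M" and f: "f \<in> borel_measurable M"
  shows "(\<integral>\<^sup>+x. ennreal (f x) \<partial>M) = (\<integral>\<^sup>+c\<in>{0..}. emeasure M {x \<in> space M. c < f x} \<partial>lborel)"
proof -
  interpret pair_sigma_finite M lborel
    using assms(1) by (simp add: pair_sigma_finite_def lborel.sigma_finite_measure_axioms)
  have "ennreal (f x) = emeasure lborel {0..<f x}" for x
    by (cases "0 \<le> f x") (simp_all add: ennreal_neg)
  then have "(\<integral>\<^sup>+x. ennreal (f x) \<partial>M) = (\<integral>\<^sup>+x. \<integral>\<^sup>+c. indicator {0..<f x} c \<partial>lborel \<partial>M)"
    by simp
  also have "\<dots> = (\<integral>\<^sup>+c. \<integral>\<^sup>+x. indicator {0..<f x} c \<partial>M \<partial>lborel)"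
  proof (rule Fubini'[symmetric])
    have "(\<lambda>p. indicator {0..<f (fst p)} (snd p) :: ennreal) \<in> borel_measurable (M \<Otimes>\<^sub>M lborel)"
      unfolding indicator_def atLeastLessThan_iff using f by measurable
    then show "(\<lambda>(x, c). indicator {0..<f x} c :: ennreal) \<in> borel_measurable (M \<Otimes>\<^sub>M lborel)"
      by (simp add: case_prod_beta')
  qed
  also have "\<dots> = (\<integral>\<^sup>+c\<in>{0..}. emeasure M {x \<in> space M. c < f x} \<partial>lborel)"
  proof (intro nn_integral_cong)
    fix c :: real
    have "(\<integral>\<^sup>+x. indicator {0..<f x} c \<partial>M)
        = (\<integral>\<^sup>+x. indicator {0..} c * indicator {x \<in> space M. c < f x} x \<partial>M)"
      by (intro nn_integral_cong) (auto split: split_indicator)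
    also have "\<dots> = indicator {0..} c * emeasure M {x \<in> space M. c < f x}"
      using f by (simp add: nn_integral_cmult_indicator)
    finally show "(\<integral>\<^sup>+x. indicator {0..<f x} c \<partial>M) = emeasure M {x \<in> space M. c < f x} * indicator {0..} c"
      by (simp add: mult.commute)
  qed
  finally show ?thesis .
qed

lemma borel_measurable_antimono:
  fixes h :: "real \<Rightarrow> real"
  assumes "\<And>s s'. s \<le> s' \<Longrightarrow> h s' \<le> h s"
  shows "h \<in> borel_measurable borel"
proof -
  have "mono (\<lambda>s. - h s)" using assms by (simp add: mono_def)
  then show ?thesis using borel_measurable_mono borel_measurable_uminus_eq by blast
qed

lemma lower_orthant_dominates_nn_integral_le:
  fixes h :: "real \<Rightarrow> real"
  assumes dom: "lower_orthant_dominates P Q"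
    and \<sigma>: "sigma_finite_measure P" "sigma_finite_measure Q"
    and sets: "sets P = sets borel" "sets Q = sets borel"
    and anti: "\<And>s s'. s \<le> s' \<Longrightarrow> h s' \<le> h s" and D: "down_closed D"
  shows "(\<integral>\<^sup>+x. ennreal (h (fst x)) * indicator D (snd x) \<partial>P)
       \<le> (\<integral>\<^sup>+x. ennreal (h (fst x)) * indicator D (snd x) \<partial>Q)"
proof -
  have "D \<in> sets borel"
    using D by (cases rule: down_closed_cases) auto
  moreover have [measurable]: "h \<in> borel_measurable borel"
    by (rule borel_measurable_antimono[OF anti])
  define f where "f x = h (fst x) * indicator D (snd x)" for x :: "real \<times> real"
  have f: "f \<in> borel_measurable M" if "sets M = sets borel" for M :: "(real \<times> real) measure"
    unfolding f_def measurable_cong_sets[OF that refl] borel_prod[symmetric]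
    using \<open>D \<in> sets borel\<close> by measurable
  have level: "{x \<in> space M. c < f x} = {s. c < h s} \<times> D" if "sets M = sets borel" "0 \<le> c"
    for M :: "(real \<times> real) measure" and c
    using sets_eq_imp_space_eq[OF that(1)] that(2) by (auto simp: f_def split: split_indicator)
  have "down_closed {s. c < h s}" for c
    unfolding down_closed_def using anti by (auto intro: less_le_trans)
  then have "emeasure P {x \<in> space P. c < f x} \<le> emeasure Q {x \<in> space Q. c < f x}" if "0 \<le> c" for c
    using lower_orthant_dominates_Times[OF dom sets _ D] level[OF sets(1) that] level[OF sets(2) that]
    by simp
  then have "(\<integral>\<^sup>+c\<in>{0..}. emeasure P {x \<in> space P. c < f x} \<partial>lborel)
      \<le> (\<integral>\<^sup>+c\<in>{0..}. emeasure Q {x \<in> space Q. c < f x} \<partial>lborel)"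
    by (intro nn_integral_mono) (simp split: split_indicator)
  moreover have "ennreal (h (fst x)) * indicator D (snd x) = ennreal (f x)" for x
    by (simp add: f_def split: split_indicator)
  ultimately show ?thesis
    using nn_integral_layer_cake[OF \<sigma>(1) f[OF sets(1)]] nn_integral_layer_cake[OF \<sigma>(2) f[OF sets(2)]]
    by simp
qed

section \<open>Truncated increasing functions of one variable\<close>

lemma nn_integral_derivative_until_level:
  fixes f f' :: "real \<Rightarrow> real"
  assumes mono: "strict_mono f" and deriv: "\<And>t. (f has_real_derivative f' t) (at t)"
    and meas: "f' \<in> borel_measurable borel" and "z \<le> \<tau>"
  shows "(\<integral>\<^sup>+t\<in>{z..}. ennreal (if f t < f \<tau> then f' t else 0) \<partial>lborel) = ennreal (f \<tau> - f z)"
proof -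
  have f'_nonneg: "0 \<le> f' t" for t
    using mono_on_imp_deriv_nonneg[of UNIV f, OF _ deriv] strict_mono_mono[OF mono] by simp
  have "AE t in lborel. ennreal (if f t < f \<tau> then f' t else 0) * indicator {z..} t
      = ennreal (f' t) * indicator {z..\<tau>} t"
    using AE_lborel_singleton[of \<tau>]
  proof eventually_elim
    case (elim t)
    then have "f t < f \<tau> \<longleftrightarrow> t < \<tau>"
      using mono by (simp add: strict_mono_less)
    then show ?case using elim by (auto split: split_indicator)
  qed
  then show ?thesis
    using nn_integral_FTC_Icc[OF meas deriv f'_nonneg \<open>z \<le> \<tau>\<close>] by (simp add: nn_integral_cong_AE)
qed

lemma nn_integral_derivative_below_level:
  fixes f f' :: "real \<Rightarrow> real"
  assumes mono: "strict_mono f" and deriv: "\<And>t. (f has_real_derivative f' t) (at t)"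
    and meas: "f' \<in> borel_measurable borel" and below: "\<And>t. f t < n"
  shows "ennreal (n - f z) = ennreal (INF t. max (n - f t) 0) + (\<integral>\<^sup>+t\<in>{z..}. ennreal (f' t) \<partial>lborel)"
proof -
  have f'_nonneg: "0 \<le> f' t" for t
    using mono_on_imp_deriv_nonneg[of UNIV f, OF _ deriv] strict_mono_mono[OF mono] by simp
  define L where "L = Sup (range f)"
  have bdd: "bdd_above (range f)" using below by (intro bdd_aboveI2[of _ _ n]) (simp add: less_imp_le)
  have f_le: "f t \<le> L" for t unfolding L_def using bdd by (auto intro: cSup_upper)
  have "L \<le> n" unfolding L_def using below by (auto intro: less_imp_le cSup_least)
  have lim: "(f \<longlongrightarrow> L) at_top"
  proof (rule order_tendstoI)
    fix a assume "a < L"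
    then obtain t where "a < f t" using less_cSup_iff[OF _ bdd] unfolding L_def by auto
    then show "\<forall>\<^sub>F x in at_top. a < f x"
      using strict_mono_mono[OF mono] by (auto simp: eventually_at_top_linorder mono_def intro: less_le_trans)
  qed (use f_le in \<open>auto intro: always_eventually le_less_trans\<close>)
  have "(INF t. max (n - f t) 0) = n - L"
  proof (rule antisym)
    have bdd: "bdd_below (range (\<lambda>t. max (n - f t) 0))"
      by (rule bdd_belowI[of _ 0]) auto
    have "(INF t. max (n - f t) 0) \<le> n - f t" for t
      using cINF_lower[OF bdd, of t] below[of t] by simp
    moreover have "((\<lambda>t. n - f t) \<longlongrightarrow> n - L) at_top"
      by (intro tendsto_intros lim)
    ultimately show "(INF t. max (n - f t) 0) \<le> n - L"
      by (intro tendsto_lowerbound[where F=at_top] always_eventually) auto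
  qed (use f_le in \<open>auto intro!: cINF_greatest simp: le_max_iff_disj\<close>)
  moreover have "(\<integral>\<^sup>+t\<in>{z..}. ennreal (f' t) \<partial>lborel) = ennreal (L - f z)"
    using nn_integral_FTC_atLeast[OF meas deriv f'_nonneg lim] by simp
  ultimately show ?thesis using f_le[of z] \<open>L \<le> n\<close> by (simp flip: ennreal_plus)
qed

lemma INF_max_diff_eq_0:
  fixes f :: "real \<Rightarrow> real"
  assumes "n \<le> f \<tau>"
  shows "(INF t. max (n - f t) 0) = 0"
proof (rule antisym)
  have bdd: "bdd_below (range (\<lambda>t. max (n - f t) 0))"
    by (rule bdd_belowI[of _ 0]) auto
  show "(INF t. max (n - f t) 0) \<le> 0"
    using cINF_lower[OF bdd, of \<tau>] assms by simp
qed (auto intro: cINF_greatest)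

lemma pos_part_eq_INF_plus_nn_integral_derivative:
  fixes f f' :: "real \<Rightarrow> real"
  assumes mono: "strict_mono f" and deriv: "\<And>t. (f has_real_derivative f' t) (at t)"
    and meas: "f' \<in> borel_measurable borel"
  shows "ennreal (n - f z) = ennreal (INF t. max (n - f t) 0)
           + (\<integral>\<^sup>+t\<in>{z..}. ennreal (if f t < n then f' t else 0) \<partial>lborel)"
proof -
  consider (above) "n \<le> f z" | (crossing) \<tau> where "z \<le> \<tau>" "f \<tau> = n" | (below) "\<And>t. f t < n"
  proof (cases "n \<le> f z")
    case False
    show ?thesis
    proof (cases "\<exists>t. n \<le> f t")
      case True
      then obtain t where "n \<le> f t" by blast
      moreover have "z \<le> t"
      proof (rule ccontr)
        assume "\<not> z \<le> t"
        then have "f t < f z" using mono by (simp add: strict_mono_less)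
        then show False using \<open>n \<le> f t\<close> False by simp
      qed
      ultimately obtain \<tau> where "z \<le> \<tau>" "f \<tau> = n"
        using IVT[of f z n t] False deriv DERIV_isCont by force
      then show ?thesis by (rule that(2))
    qed (use that in \<open>auto simp: not_le\<close>)
  qed (use that in auto)
  then show ?thesis
  proof cases
    case above
    then have "ennreal (if f t < n then f' t else 0) * indicator {z..} t = 0" for t
      using strict_mono_mono[OF mono] by (force simp: mono_def split: split_indicator)
    then have "(\<integral>\<^sup>+t\<in>{z..}. ennreal (if f t < n then f' t else 0) \<partial>lborel) = 0"
      by (simp only:) simp
    then show ?thesis using above INF_max_diff_eq_0[of n f z] by (simp add: ennreal_neg)
  next
    case (crossing \<tau>)
    then show ?thesis
      using nn_integral_derivative_until_level[OF mono deriv meas \<open>z \<le> \<tau>\<close>] INF_max_diff_eq_0[of n f \<tau>] by simp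
  next
    case below
    then show ?thesis
      using nn_integral_derivative_below_level[OF mono deriv meas] by simp
  qed
qed

section \<open>Increasing submodular functions\<close>

locale submodular_utility =
  fixes u :: "real \<times> real \<Rightarrow> real" and u2 :: "real \<Rightarrow> real \<Rightarrow> real"
  assumes mono_fst: "s \<le> s' \<Longrightarrow> u (s, t) \<le> u (s', t)"
    and strict_mono_snd: "strict_mono (\<lambda>t. u (s, t))"
    and has_derivative_snd: "((\<lambda>t. u (s, t)) has_real_derivative u2 s t) (at t)"
    and derivative_snd_antimono: "s \<le> s' \<Longrightarrow> u2 s' t \<le> u2 s t"
begin

lemma mono_snd: "t \<le> t' \<Longrightarrow> u (s, t) \<le> u (s, t')"
  using strict_mono_mono[OF strict_mono_snd] by (simp add: mono_def)

lemma derivative_snd_nonneg: "0 \<le> u2 s t"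
  using strict_mono_mono[OF strict_mono_snd] has_derivative_snd
  by (rule mono_on_imp_deriv_nonneg) simp

lemma less_iff_Rats_snd:
  "c < u x \<longleftrightarrow> (\<exists>q::rat. of_rat q < snd x \<and> c < u (fst x, of_rat q))"
proof
  assume "c < u x"
  have "isCont (\<lambda>t. u (fst x, t)) (snd x)"
    using has_derivative_snd by (rule DERIV_isCont)
  then have "((\<lambda>t. u (fst x, t)) \<longlongrightarrow> u x) (at_left (snd x))"
    by (simp add: isCont_def tendsto_mono[OF at_within_le_at])
  then have "\<forall>\<^sub>F t in at_left (snd x). c < u (fst x, t)"
    using \<open>c < u x\<close> by (rule order_tendstoD)
  then obtain b where "b < snd x" "\<forall>t>b. t < snd x \<longrightarrow> c < u (fst x, t)"
    unfolding eventually_at_left_field by blast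
  moreover obtain r where "r \<in> \<rat>" "b < r" "r < snd x"
    using Rats_dense_in_real[OF \<open>b < snd x\<close>] by blast
  moreover obtain q where "r = of_rat q"
    using \<open>r \<in> \<rat>\<close> by (cases rule: Rats_cases)
  ultimately show "\<exists>q::rat. of_rat q < snd x \<and> c < u (fst x, of_rat q)"
    by blast
next
  assume "\<exists>q::rat. of_rat q < snd x \<and> c < u (fst x, of_rat q)"
  then obtain q :: rat where "of_rat q < snd x" "c < u (fst x, of_rat q)" by blast
  moreover have "u (fst x, of_rat q) \<le> u (fst x, snd x)"
    using \<open>of_rat q < snd x\<close> by (intro mono_snd) simp
  ultimately show "c < u x" by simp
qed

lemma borel_measurable_u [measurable]: "u \<in> borel_measurable (borel \<Otimes>\<^sub>M borel)"
proof -
  have "(\<lambda>s. u (s, t)) \<in> borel_measurable borel" for t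
    using mono_fst by (intro borel_measurable_mono) (simp add: mono_def)
  then have "{s. c < u (s, t)} \<in> sets borel" for c t
    using borel_measurable_iff_greater[THEN iffD1, rule_format, of "\<lambda>s. u (s, t)" borel c] by simp
  moreover have "{x \<in> space (borel \<Otimes>\<^sub>M borel). c < u x}
      = (\<Union>q::rat. {s. c < u (s, of_rat q)} \<times> {of_rat q<..})" for c
  proof -
    have "x \<in> (\<Union>q::rat. {s. c < u (s, of_rat q)} \<times> {of_rat q<..}) \<longleftrightarrow> c < u x" for x
      by (subst less_iff_Rats_snd) (auto simp: mem_Times_iff)
    then show ?thesis by (auto simp: space_pair_measure)
  qed
  ultimately have "{x \<in> space (borel \<Otimes>\<^sub>M borel). c < u x} \<in> sets (borel \<Otimes>\<^sub>M borel)" for c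
    by (simp only:) (intro sets.countable_UN'' countableI_type pair_measureI; simp)
  then show ?thesis by (simp add: borel_measurable_iff_greater)
qed

lemma borel_measurable_u2 [measurable]: "case_prod u2 \<in> borel_measurable (borel \<Otimes>\<^sub>M borel)"
proof (rule borel_measurable_LIMSEQ_real)
  fix x :: "real \<times> real"
  have quotient: "(\<lambda>h. (u (fst x, snd x + h) - u x) / h) \<midarrow>0\<rightarrow> u2 (fst x) (snd x)"
    using has_derivative_snd[of "fst x" "snd x"] by (simp add: DERIV_def)
  have lim: "(\<lambda>k. 1 / Suc k) \<longlonglongrightarrow> (0::real)"
    using LIMSEQ_Suc[OF lim_const_over_n[of 1]] by simp
  show "(\<lambda>k. (u (fst x, snd x + 1 / Suc k) - u x) / (1 / Suc k)) \<longlonglongrightarrow> case_prod u2 x"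
    unfolding case_prod_beta
    by (rule LIMSEQ_SEQ_conv[THEN iffD2, OF quotient, rule_format, OF conjI[OF _ lim]]) simp
qed measurable

definition gap_at_top :: "real \<Rightarrow> real \<Rightarrow> real" where
  "gap_at_top n s = (INF t. max (n - u (s, t)) 0)"

definition density_below :: "real \<Rightarrow> real \<Rightarrow> real \<Rightarrow> real" where
  "density_below n s t = (if u (s, t) < n then u2 s t else 0)"

lemma gap_at_top_antimono:
  assumes "s \<le> s'" shows "gap_at_top n s' \<le> gap_at_top n s"
  unfolding gap_at_top_def
proof (intro cINF_mono)
  fix t
  show "\<exists>t'\<in>UNIV. max (n - u (s', t')) 0 \<le> max (n - u (s, t)) 0"
    using mono_fst[OF assms, of t] by (intro bexI[of _ t]) auto
qed (auto intro: bdd_belowI2[of _ 0])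

lemma density_below_antimono: "s \<le> s' \<Longrightarrow> density_below n s' t \<le> density_below n s t"
  using mono_fst[of s s' t] derivative_snd_antimono[of s s' t] derivative_snd_nonneg[of s t]
  unfolding density_below_def by simp

lemma borel_measurable_density_below [measurable]:
  "case_prod (density_below n) \<in> borel_measurable (borel \<Otimes>\<^sub>M borel)"
proof -
  have "case_prod (density_below n) = (\<lambda>x. if u x < n then case_prod u2 x else 0)"
    by (simp add: density_below_def fun_eq_iff)
  then show ?thesis by simp
qed

lemma pos_part_eq_gap_plus_nn_integral:
  "ennreal (n - u (s, z))
    = ennreal (gap_at_top n s) + (\<integral>\<^sup>+t\<in>{z..}. ennreal (density_below n s t) \<partial>lborel)"
  unfolding gap_at_top_def density_below_def
  by (rule pos_part_eq_INF_plus_nn_integral_derivative[OF strict_mono_snd has_derivative_snd])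
    measurable

lemma nn_integral_pos_part_split:
  assumes "sigma_finite_measure P" and sets_P: "sets P = sets borel"
  shows "(\<integral>\<^sup>+x. ennreal (n - u x) \<partial>P)
       = (\<integral>\<^sup>+x. ennreal (gap_at_top n (fst x)) * indicator UNIV (snd x) \<partial>P)
         + (\<integral>\<^sup>+t. \<integral>\<^sup>+x. ennreal (density_below n (fst x) t) * indicator {..t} (snd x) \<partial>P \<partial>lborel)"
proof -
  interpret sigma_finite_measure P by fact
  interpret pair_sigma_finite P lborel
    by (simp add: pair_sigma_finite_def lborel.sigma_finite_measure_axioms sigma_finite_measure_axioms)
  have [measurable_cong]: "sets P = sets (borel \<Otimes>\<^sub>M borel)"
    by (simp only: sets_P borel_prod)
  have [measurable]: "gap_at_top n \<in> borel_measurable borel"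
    by (rule borel_measurable_antimono[OF gap_at_top_antimono])
  define k where "k x t = ennreal (density_below n (fst x) t) * indicator {..t} (snd x)"
    for x :: "real \<times> real" and t :: real
  have [measurable]: "(\<lambda>p. k (fst p) (snd p)) \<in> borel_measurable ((borel \<Otimes>\<^sub>M borel) \<Otimes>\<^sub>M borel)"
  proof -
    have "(\<lambda>p. k (fst p) (snd p)) = (\<lambda>p. if snd (fst p) \<le> snd p
        then ennreal (case_prod (density_below n) (fst (fst p), snd p)) else 0)"
      by (auto simp: k_def fun_eq_iff)
    then show ?thesis by simp
  qed
  then have k: "case_prod k \<in> borel_measurable (P \<Otimes>\<^sub>M lborel)"
    by (simp add: case_prod_beta')
  have "(\<integral>\<^sup>+x. ennreal (n - u x) \<partial>P)
      = (\<integral>\<^sup>+x. ennreal (gap_at_top n (fst x)) + (\<integral>\<^sup>+t. k x t \<partial>lborel) \<partial>P)"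
    using pos_part_eq_gap_plus_nn_integral[of n "fst x" "snd x" for x]
    by (intro nn_integral_cong) (simp add: k_def indicator_def mult.commute)
  also have "\<dots> = (\<integral>\<^sup>+x. ennreal (gap_at_top n (fst x)) \<partial>P) + (\<integral>\<^sup>+x. \<integral>\<^sup>+t. k x t \<partial>lborel \<partial>P)"
    using k by (intro nn_integral_add) measurable
  also have "(\<integral>\<^sup>+x. \<integral>\<^sup>+t. k x t \<partial>lborel \<partial>P) = (\<integral>\<^sup>+t. \<integral>\<^sup>+x. k x t \<partial>P \<partial>lborel)"
    using k by (rule Fubini'[symmetric])
  finally show ?thesis by (simp add: k_def)
qed

theorem nn_integral_pos_part_le:
  assumes dom: "lower_orthant_dominates P Q"
    and \<sigma>: "sigma_finite_measure P" "sigma_finite_measure Q"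
    and sets: "sets P = sets borel" "sets Q = sets borel"
  shows "(\<integral>\<^sup>+x. ennreal (n - u x) \<partial>P) \<le> (\<integral>\<^sup>+x. ennreal (n - u x) \<partial>Q)"
  unfolding nn_integral_pos_part_split[OF \<sigma>(1) sets(1)] nn_integral_pos_part_split[OF \<sigma>(2) sets(2)]
proof (intro add_mono nn_integral_mono)
  show "(\<integral>\<^sup>+x. ennreal (gap_at_top n (fst x)) * indicator UNIV (snd x) \<partial>P)
      \<le> (\<integral>\<^sup>+x. ennreal (gap_at_top n (fst x)) * indicator UNIV (snd x) \<partial>Q)"
    by (rule lower_orthant_dominates_nn_integral_le[OF dom \<sigma> sets gap_at_top_antimono down_closed_UNIV])
  show "(\<integral>\<^sup>+x. ennreal (density_below n (fst x) t) * indicator {..t} (snd x) \<partial>P)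
      \<le> (\<integral>\<^sup>+x. ennreal (density_below n (fst x) t) * indicator {..t} (snd x) \<partial>Q)" for t
    by (rule lower_orthant_dominates_nn_integral_le[OF dom \<sigma> sets density_below_antimono
          down_closed_atMost])
qed

end

section \<open>Mixing with a point mass\<close>

text \<open>The mixture \<open>\<theta> P + (1 - \<theta>) \<delta>\<^sub>p\<close>, as a Giry-monad bind over a biased coin.\<close>
definition mix_point :: "real \<Rightarrow> 'a measure \<Rightarrow> 'a \<Rightarrow> 'a measure" where
  "mix_point \<theta> P p = measure_pmf (bernoulli_pmf \<theta>) \<bind> (\<lambda>b. if b then P else return P p)"

context
  fixes P :: "'a measure" and p :: 'a and \<theta> :: real
  assumes P: "prob_space P" and p: "p \<in> space P" and \<theta>: "0 \<le> \<theta>" "\<theta> \<le> 1"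
begin

lemma mix_point_kernel:
  "(\<lambda>b. if b then P else return P p) \<in> measurable (measure_pmf (bernoulli_pmf \<theta>)) (subprob_algebra P)"
  using P p by (auto simp: space_subprob_algebra prob_space_imp_subprob_space subprob_space_return)

lemma sets_mix_point [simp]: "sets (mix_point \<theta> P p) = sets P"
  unfolding mix_point_def by (subst sets_bind) auto

lemma prob_space_mix_point: "prob_space (mix_point \<theta> P p)"
  unfolding mix_point_def using P p
  by (intro measure_pmf.prob_space_bind[OF _ mix_point_kernel]) (auto intro: prob_space_return)

lemma nn_integral_mix_point:
  assumes "f \<in> borel_measurable P"
  shows "(\<integral>\<^sup>+x. f x \<partial>mix_point \<theta> P p) = ennreal \<theta> * (\<integral>\<^sup>+x. f x \<partial>P) + ennreal (1 - \<theta>) * f p"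
  unfolding mix_point_def nn_integral_bind[OF assms mix_point_kernel]
  using \<theta> p assms by (simp add: nn_integral_return mult.commute)

lemma emeasure_mix_point:
  assumes "A \<in> sets P"
  shows "emeasure (mix_point \<theta> P p) A = ennreal (\<theta> * measure P A + (1 - \<theta>) * indicator A p)"
proof -
  interpret prob_space P by (rule P)
  have "emeasure (mix_point \<theta> P p) A = (\<integral>\<^sup>+x. indicator A x \<partial>mix_point \<theta> P p)"
    using assms by simp
  also have "\<dots> = ennreal \<theta> * emeasure P A + ennreal (1 - \<theta>) * indicator A p"
    using assms by (subst nn_integral_mix_point) simp_all
  also have "\<dots> = ennreal (\<theta> * measure P A + (1 - \<theta>) * indicator A p)"
    using \<theta> by (simp add: emeasure_eq_measure ennreal_plus ennreal_mult ennreal_indicator)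
  finally show ?thesis .
qed

end

lemma lower_orthant_dominates_mix_point:
  assumes P: "prob_space P" "sets P = sets borel" and Q: "prob_space Q" "sets Q = sets borel"
    and "0 \<le> \<eta>"
    and mass: "\<And>s t. measure P ({..s} \<times> {..t}) + \<eta> * indicator ({..s} \<times> {..t}) p
                  \<le> measure Q ({..s} \<times> {..t}) + \<eta> * indicator ({..s} \<times> {..t}) q"
  shows "lower_orthant_dominates (mix_point (1 / (1 + \<eta>)) P p) (mix_point (1 / (1 + \<eta>)) Q q)"
  unfolding lower_orthant_dominates_def
proof (intro allI)
  fix s t :: real
  define A where "A = {..s} \<times> {..t}"
  have A: "A \<in> sets borel" unfolding A_def by (auto intro: borel_closed closed_Times)
  have mix: "1 / (1 + \<eta>) * m + (1 - 1 / (1 + \<eta>)) * i = (m + \<eta> * i) / (1 + \<eta>)" for m i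
  proof -
    have "1 + \<eta> \<noteq> 0" using \<open>0 \<le> \<eta>\<close> by simp
    then have "1 - 1 / (1 + \<eta>) = \<eta> / (1 + \<eta>)" by (simp add: field_simps)
    then show ?thesis by (simp add: add_divide_distrib)
  qed
  have "emeasure (mix_point (1 / (1 + \<eta>)) M r) A
      = ennreal ((measure M A + \<eta> * indicator A r) / (1 + \<eta>))"
    if "prob_space M" "sets M = sets borel" for M and r :: "real \<times> real"
  proof -
    have "r \<in> space M" "A \<in> sets M" "0 \<le> 1 / (1 + \<eta>)" "1 / (1 + \<eta>) \<le> 1"
      using sets_eq_imp_space_eq[OF that(2)] that(2) A \<open>0 \<le> \<eta>\<close> by auto
    then have "emeasure (mix_point (1 / (1 + \<eta>)) M r) A
        = ennreal (1 / (1 + \<eta>) * measure M A + (1 - 1 / (1 + \<eta>)) * indicator A r)"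
      by (intro emeasure_mix_point[OF that(1)])
    then show ?thesis by (simp only: mix)
  qed
  moreover have "(measure P A + \<eta> * indicator A p) / (1 + \<eta>) \<le> (measure Q A + \<eta> * indicator A q) / (1 + \<eta>)"
    using mass \<open>0 \<le> \<eta>\<close> unfolding A_def by (intro divide_right_mono) auto
  ultimately show "emeasure (mix_point (1 / (1 + \<eta>)) P p) A \<le> emeasure (mix_point (1 / (1 + \<eta>)) Q q) A"
    using P Q by (simp add: ennreal_leI)
qed

lemma integral_min_le:
  fixes f :: "'a \<Rightarrow> real"
  assumes "prob_space M" "integrable M f"
  shows "(\<integral>x. min (f x) n \<partial>M) \<le> n"
proof -
  interpret prob_space M by fact
  have "(\<integral>x. min (f x) n \<partial>M) \<le> (\<integral>x. n \<partial>M)"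
    using assms(2) by (intro integral_mono) auto
  then show ?thesis by (simp add: prob_space)
qed

lemma nn_integral_pos_part_eq:
  assumes "prob_space M" "integrable M f"
  shows "(\<integral>\<^sup>+x. ennreal (n - f x) \<partial>M) = ennreal (n - (\<integral>x. min (f x) n \<partial>M))"
proof -
  interpret prob_space M by fact
  have "(\<integral>\<^sup>+x. ennreal (n - f x) \<partial>M) = (\<integral>\<^sup>+x. ennreal (n - min (f x) n) \<partial>M)"
    by (intro nn_integral_cong) (simp add: ennreal_neg min_def)
  also have "\<dots> = ennreal (\<integral>x. n - min (f x) n \<partial>M)"
    using assms(2) by (intro nn_integral_eq_integral) auto
  also have "(\<integral>x. n - min (f x) n \<partial>M) = n - (\<integral>x. min (f x) n \<partial>M)"
    using assms(2) by (simp add: prob_space)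
  finally show ?thesis .
qed

lemma nn_integral_pos_part_mix_point:
  assumes M: "prob_space M" "r \<in> space M" "integrable M f" and \<theta>: "0 \<le> \<theta>" "\<theta> \<le> 1"
    and "f r \<le> n"
  shows "(\<integral>\<^sup>+x. ennreal (n - f x) \<partial>mix_point \<theta> M r)
       = ennreal (\<theta> * (n - (\<integral>x. min (f x) n \<partial>M)) + (1 - \<theta>) * (n - f r))"
proof -
  have [measurable]: "f \<in> borel_measurable M"
    using M(3) by (rule borel_measurable_integrable)
  have "(\<integral>\<^sup>+x. ennreal (n - f x) \<partial>mix_point \<theta> M r)
      = ennreal \<theta> * ennreal (n - (\<integral>x. min (f x) n \<partial>M)) + ennreal (1 - \<theta>) * ennreal (n - f r)"
    using M \<theta> by (simp add: nn_integral_mix_point nn_integral_pos_part_eq)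
  also have "\<dots> = ennreal (\<theta> * (n - (\<integral>x. min (f x) n \<partial>M)) + (1 - \<theta>) * (n - f r))"
    using \<theta> integral_min_le[OF M(1,3), of n] \<open>f r \<le> n\<close> by (simp add: ennreal_plus ennreal_mult)
  finally show ?thesis .
qed

lemma tendsto_integral_min_at_top:
  fixes f :: "'a \<Rightarrow> real"
  assumes "integrable M f"
  shows "((\<lambda>n. \<integral>x. min (f x) n \<partial>M) \<longlongrightarrow> (\<integral>x. f x \<partial>M)) at_top"
proof (rule integral_dominated_convergence_at_top[where w="\<lambda>x. \<bar>f x\<bar>"])
  show "AE x in M. ((\<lambda>n. min (f x) n) \<longlongrightarrow> f x) at_top"
  proof (rule AE_I2)
    fix x
    have "\<forall>\<^sub>F n in at_top. min (f x) n = f x"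
      using eventually_ge_at_top[of "f x"] by (rule eventually_mono) simp
    then show "((\<lambda>n. min (f x) n) \<longlongrightarrow> f x) at_top" by (rule tendsto_eventually)
  qed
  show "\<forall>\<^sub>F n in at_top. AE x in M. norm (min (f x) n) \<le> \<bar>f x\<bar>"
    by (intro eventually_mono[OF eventually_ge_at_top[of 0]] AE_I2) auto
qed (use assms in auto)

theorem (in submodular_utility) integral_min_mix_point_le:
  assumes P: "prob_space P" "sets P = sets borel" "integrable P u"
    and Q: "prob_space Q" "sets Q = sets borel" "integrable Q u"
    and \<theta>: "0 \<le> \<theta>" "\<theta> \<le> 1"
    and dom: "lower_orthant_dominates (mix_point \<theta> P p) (mix_point \<theta> Q q)"
    and "u p \<le> n" "u q \<le> n"
  shows "\<theta> * (\<integral>x. min (u x) n \<partial>Q) + (1 - \<theta>) * u q \<le> \<theta> * (\<integral>x. min (u x) n \<partial>P) + (1 - \<theta>) * u p"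
proof -
  have p: "p \<in> space P" and q: "q \<in> space Q"
    using sets_eq_imp_space_eq[OF P(2)] sets_eq_imp_space_eq[OF Q(2)] by auto
  have nonneg: "0 \<le> \<theta> * (n - (\<integral>x. min (u x) n \<partial>Q)) + (1 - \<theta>) * (n - u q)"
    using integral_min_le[OF Q(1,3), of n] \<theta> \<open>u q \<le> n\<close>
    by (intro add_nonneg_nonneg mult_nonneg_nonneg) auto
  have "ennreal (\<theta> * (n - (\<integral>x. min (u x) n \<partial>P)) + (1 - \<theta>) * (n - u p))
      = (\<integral>\<^sup>+x. ennreal (n - u x) \<partial>mix_point \<theta> P p)"
    by (rule nn_integral_pos_part_mix_point[OF P(1) p P(3) \<theta> \<open>u p \<le> n\<close>, symmetric])
  also have "\<dots> \<le> (\<integral>\<^sup>+x. ennreal (n - u x) \<partial>mix_point \<theta> Q q)"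
    by (rule nn_integral_pos_part_le[OF dom]) (use P Q p q \<theta> in
        \<open>simp_all add: prob_space_imp_sigma_finite prob_space_mix_point\<close>)
  also have "\<dots> = ennreal (\<theta> * (n - (\<integral>x. min (u x) n \<partial>Q)) + (1 - \<theta>) * (n - u q))"
    by (rule nn_integral_pos_part_mix_point[OF Q(1) q Q(3) \<theta> \<open>u q \<le> n\<close>])
  finally have "\<theta> * (n - (\<integral>x. min (u x) n \<partial>P)) + (1 - \<theta>) * (n - u p)
      \<le> \<theta> * (n - (\<integral>x. min (u x) n \<partial>Q)) + (1 - \<theta>) * (n - u q)"
    by (simp only: ennreal_le_iff[OF nonneg])
  then show ?thesis by (simp add: algebra_simps)
qed

theorem (in submodular_utility) integral_mix_point_le:
  assumes P: "prob_space P" "sets P = sets borel" "integrable P u"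
    and Q: "prob_space Q" "sets Q = sets borel" "integrable Q u"
    and \<theta>: "0 \<le> \<theta>" "\<theta> \<le> 1"
    and dom: "lower_orthant_dominates (mix_point \<theta> P p) (mix_point \<theta> Q q)"
  shows "\<theta> * (\<integral>x. u x \<partial>Q) + (1 - \<theta>) * u q \<le> \<theta> * (\<integral>x. u x \<partial>P) + (1 - \<theta>) * u p"
proof -
  have lim: "((\<lambda>n. \<theta> * (\<integral>x. min (u x) n \<partial>M) + (1 - \<theta>) * u r)
      \<longlongrightarrow> \<theta> * (\<integral>x. u x \<partial>M) + (1 - \<theta>) * u r) at_top"
    if "integrable M u" for M r
    by (intro tendsto_intros tendsto_integral_min_at_top that)
  have "\<forall>\<^sub>F n in at_top. \<theta> * (\<integral>x. min (u x) n \<partial>Q) + (1 - \<theta>) * u q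
      \<le> \<theta> * (\<integral>x. min (u x) n \<partial>P) + (1 - \<theta>) * u p"
    using eventually_ge_at_top[of "max (u p) (u q)"]
    by (rule eventually_mono) (intro integral_min_mix_point_le[OF P Q \<theta> dom]; simp)
  then show ?thesis
    by (rule tendsto_le[OF trivial_limit_at_top_linorder lim[OF P(3)] lim[OF Q(3)]])
qed

section \<open>Slack from a strict marginal inequality\<close>

lemma (in finite_measure) exists_measure_le_right:
  fixes g :: "'a \<Rightarrow> real"
  assumes g: "g \<in> borel_measurable M" and "0 < \<epsilon>"
  obtains a' where "a < a'"
    "measure M {x \<in> space M. g x \<le> a'} < measure M {x \<in> space M. g x \<le> a} + \<epsilon>"
proof -
  interpret D: finite_borel_measure "distr M borel g"
    by (intro finite_borel_measure.intro finite_borel_measure_axioms.intro finite_measure_distr g) simp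
  have cdf: "cdf (distr M borel g) b = measure M {x \<in> space M. g x \<le> b}" for b
    using g by (simp add: cdf_def measure_distr vimage_def Int_def conj_commute)
  have "\<forall>\<^sub>F b in at_right a. cdf (distr M borel g) b < cdf (distr M borel g) a + \<epsilon>"
    using D.cdf_is_right_cont[of a] \<open>0 < \<epsilon>\<close>
    by (intro order_tendstoD(2)) (auto simp: continuous_within)
  then obtain b where "a < b"
    "\<And>y. a < y \<Longrightarrow> y < b \<Longrightarrow> cdf (distr M borel g) y < cdf (distr M borel g) a + \<epsilon>"
    unfolding eventually_at_right_field by blast
  moreover have "a < (a + b) / 2" "(a + b) / 2 < b" using \<open>a < b\<close> by auto
  ultimately show ?thesis using that unfolding cdf by blast
qed

lemma (in finite_measure) exists_measure_Int_atMost_gt: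
  fixes h :: "'a \<Rightarrow> real"
  assumes A: "A \<in> sets M" and h: "h \<in> borel_measurable M" and "0 < \<epsilon>"
  obtains T where "measure M A - \<epsilon> < measure M (A \<inter> {x \<in> space M. h x \<le> T})"
proof -
  define B where "B k = A \<inter> {x \<in> space M. h x \<le> real k}" for k
  have "range B \<subseteq> sets M" using A h unfolding B_def by auto
  moreover have "incseq B" unfolding B_def incseq_def by (auto intro: order_trans)
  moreover have "(\<Union>k. B k) = A"
    using sets.sets_into_space[OF A] unfolding B_def by (auto intro: real_arch_simple)
  ultimately have "(\<lambda>k. measure M (B k)) \<longlonglongrightarrow> measure M A"
    by (metis finite_Lim_measure_incseq)
  then have "\<forall>\<^sub>F k in sequentially. measure M A - \<epsilon> < measure M (B k)"
    using \<open>0 < \<epsilon>\<close> by (intro order_tendstoD(1)) auto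
  then obtain k where "measure M A - \<epsilon> < measure M (B k)"
    unfolding eventually_sequentially by blast
  then show ?thesis using that unfolding B_def by blast
qed

lemma strict_marginal_slack:
  fixes g h :: "real \<times> real \<Rightarrow> real"
  assumes P: "prob_space P" "sets P = sets borel" and Q: "prob_space Q" "sets Q = sets borel"
    and [measurable]: "g \<in> borel_measurable borel" "h \<in> borel_measurable borel"
    and strict: "measure P {x. g x \<le> a} < measure Q {x. g x \<le> a}"
  obtains \<eta> a' T where "0 < \<eta>" "a < a'"
    "measure P {x. g x \<le> a'} + \<eta> \<le> measure Q {x. g x \<le> a \<and> h x \<le> T}"
proof -
  interpret P: prob_space P by (rule P(1))
  interpret Q: prob_space Q by (rule Q(1))
  have [measurable_cong, simp]: "sets P = sets borel" "sets Q = sets borel" "space P = UNIV" "space Q = UNIV"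
    using P(2) Q(2) sets_eq_imp_space_eq[OF P(2)] sets_eq_imp_space_eq[OF Q(2)] by auto
  define \<eta> where "\<eta> = (measure Q {x. g x \<le> a} - measure P {x. g x \<le> a}) / 3"
  have "0 < \<eta>" using strict unfolding \<eta>_def by simp
  obtain a' where a': "a < a'" "measure P {x. g x \<le> a'} < measure P {x. g x \<le> a} + \<eta>"
    using P.exists_measure_le_right[of g \<eta> a] \<open>0 < \<eta>\<close> by auto
  obtain T where "measure Q {x. g x \<le> a} - \<eta> < measure Q ({x. g x \<le> a} \<inter> {x. h x \<le> T})"
    using Q.exists_measure_Int_atMost_gt[of "{x. g x \<le> a}" h \<eta>] \<open>0 < \<eta>\<close> by auto
  moreover have "{x. g x \<le> a} \<inter> {x. h x \<le> T} = {x. g x \<le> a \<and> h x \<le> T}" by auto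
  ultimately have T: "measure Q {x. g x \<le> a} - \<eta> < measure Q {x. g x \<le> a \<and> h x \<le> T}"
    by simp
  have "measure Q {x. g x \<le> a} - measure P {x. g x \<le> a} = 3 * \<eta>"
    unfolding \<eta>_def by simp
  then have "measure P {x. g x \<le> a'} + \<eta> \<le> measure Q {x. g x \<le> a \<and> h x \<le> T}"
    using a'(2) T by linarith
  then show ?thesis using that[OF \<open>0 < \<eta>\<close> a'(1)] by blast
qed

lemma measure_le_borel:
  assumes "prob_space M" "sets M = sets borel" "A \<subseteq> B" "B \<in> sets borel"
  shows "measure M A \<le> measure M B"
  using assms by (intro finite_measure.finite_measure_mono prob_space.finite_measure) auto

lemma closed_half_planes:
  "closed {x :: real \<times> real. fst x \<le> c}" "closed {x :: real \<times> real. snd x \<le> c}"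
  by (auto intro!: closed_Collect_le continuous_intros)

lemma borel_measurable_fst_snd:
  "fst \<in> borel_measurable (borel :: (real \<times> real) measure)"
  "snd \<in> borel_measurable (borel :: (real \<times> real) measure)"
  by (intro borel_measurable_continuous_onI continuous_intros)+

lemma strict_marginal_slack_fst:
  assumes P: "prob_space P" "sets P = sets borel" and Q: "prob_space Q" "sets Q = sets borel"
    and "measure P {x. fst x \<le> a} < measure Q {x. fst x \<le> a}"
  obtains \<eta> p q where "0 < \<eta>" "pareto_dom q p"
    "\<And>s t. p \<in> {..s} \<times> {..t} \<Longrightarrow> q \<notin> {..s} \<times> {..t} \<Longrightarrow>
      measure P ({..s} \<times> {..t}) + \<eta> \<le> measure Q ({..s} \<times> {..t})"
proof -
  obtain \<eta> a' T where "0 < \<eta>" "a < a'"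
    and gap: "measure P {x. fst x \<le> a'} + \<eta> \<le> measure Q {x. fst x \<le> a \<and> snd x \<le> T}"
    using strict_marginal_slack[OF P Q borel_measurable_fst_snd assms(5)] by blast
  have slack: "measure P ({..s} \<times> {..t}) + \<eta> \<le> measure Q ({..s} \<times> {..t})"
    if "(a, T) \<in> {..s} \<times> {..t}" "(a', T) \<notin> {..s} \<times> {..t}" for s t
  proof -
    have "measure P ({..s} \<times> {..t}) \<le> measure P {x. fst x \<le> a'}"
      using that by (intro measure_le_borel[OF P] borel_closed closed_half_planes) auto
    moreover have "measure Q {x. fst x \<le> a \<and> snd x \<le> T} \<le> measure Q ({..s} \<times> {..t})"
      using that by (intro measure_le_borel[OF Q] borel_closed closed_Times) auto
    ultimately show ?thesis using gap by linarith
  qed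
  have "pareto_dom (a', T) (a, T)" using \<open>a < a'\<close> by (simp add: pareto_dom_def)
  then show ?thesis by (rule that[OF \<open>0 < \<eta>\<close> _ slack])
qed

lemma strict_marginal_slack_snd:
  assumes P: "prob_space P" "sets P = sets borel" and Q: "prob_space Q" "sets Q = sets borel"
    and "measure P {x. snd x \<le> b} < measure Q {x. snd x \<le> b}"
  obtains \<eta> p q where "0 < \<eta>" "pareto_dom q p"
    "\<And>s t. p \<in> {..s} \<times> {..t} \<Longrightarrow> q \<notin> {..s} \<times> {..t} \<Longrightarrow>
      measure P ({..s} \<times> {..t}) + \<eta> \<le> measure Q ({..s} \<times> {..t})"
proof -
  obtain \<eta> b' S where "0 < \<eta>" "b < b'"
    and gap: "measure P {x. snd x \<le> b'} + \<eta> \<le> measure Q {x. snd x \<le> b \<and> fst x \<le> S}"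
    using strict_marginal_slack[OF P Q borel_measurable_fst_snd(2,1) assms(5)] by blast
  have slack: "measure P ({..s} \<times> {..t}) + \<eta> \<le> measure Q ({..s} \<times> {..t})"
    if "(S, b) \<in> {..s} \<times> {..t}" "(S, b') \<notin> {..s} \<times> {..t}" for s t
  proof -
    have "measure P ({..s} \<times> {..t}) \<le> measure P {x. snd x \<le> b'}"
      using that by (intro measure_le_borel[OF P] borel_closed closed_half_planes) auto
    moreover have "measure Q {x. snd x \<le> b \<and> fst x \<le> S} \<le> measure Q ({..s} \<times> {..t})"
      using that by (intro measure_le_borel[OF Q] borel_closed closed_Times) auto
    ultimately show ?thesis using gap by linarith
  qed
  have "pareto_dom (S, b') (S, b)" using \<open>b < b'\<close> by (simp add: pareto_dom_def)
  then show ?thesis by (rule that[OF \<open>0 < \<eta>\<close> _ slack])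
qed

lemma orthant_mass_le_of_slack:
  assumes dom: "measure P ({..s} \<times> {..t}) \<le> measure Q ({..s} \<times> {..t})" and "pareto_dom q p"
    and slack: "p \<in> {..s} \<times> {..t} \<Longrightarrow> q \<notin> {..s} \<times> {..t} \<Longrightarrow>
      measure P ({..s} \<times> {..t}) + \<eta> \<le> measure Q ({..s} \<times> {..t})"
  shows "measure P ({..s} \<times> {..t}) + \<eta> * indicator ({..s} \<times> {..t}) p
       \<le> measure Q ({..s} \<times> {..t}) + \<eta> * indicator ({..s} \<times> {..t}) q"
proof -
  have "q \<in> {..s} \<times> {..t} \<Longrightarrow> p \<in> {..s} \<times> {..t}"
    using \<open>pareto_dom q p\<close> unfolding pareto_dom_def mem_Times_iff by auto
  then show ?thesis
    using dom slack by (cases "p \<in> {..s} \<times> {..t}"; cases "q \<in> {..s} \<times> {..t}") auto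
qed

section \<open>Distributional dominance\<close>

lemma dist_dom_mix_point_dominates:
  fixes X :: "'a \<Rightarrow> real \<times> real" and Y :: "'b \<Rightarrow> real \<times> real"
  assumes "prob_space M" "prob_space N" "X \<in> borel_measurable M" "Y \<in> borel_measurable N"
    and "dist_dom M X N Y"
  obtains \<theta> p q where "0 < \<theta>" "\<theta> < 1" "pareto_dom q p"
    "lower_orthant_dominates (mix_point \<theta> (distr M borel X) p) (mix_point \<theta> (distr N borel Y) q)"
proof -
  define P Q where "P = distr M borel X" and "Q = distr N borel Y"
  have P: "prob_space P" "sets P = sets borel" and Q: "prob_space Q" "sets Q = sets borel"
    using assms(1-4) by (simp_all add: P_def Q_def prob_space.prob_space_distr)
  have law: "measure P A = measure M {\<omega> \<in> space M. X \<omega> \<in> A}"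
    "measure Q A = measure N {\<omega> \<in> space N. Y \<omega> \<in> A}" if "closed A" for A
    using that assms(3,4) unfolding P_def Q_def
    by (simp_all add: measure_distr borel_closed vimage_def Int_def conj_commute)
  have dom: "measure P ({..s} \<times> {..t}) \<le> measure Q ({..s} \<times> {..t})" for s t
    using assms(5) unfolding dist_dom_def fsd_weak2_def cdf2_def
    by (simp add: law closed_Times mem_Times_iff)
  have "(\<exists>a. measure P {x. fst x \<le> a} < measure Q {x. fst x \<le> a})
      \<or> (\<exists>b. measure P {x. snd x \<le> b} < measure Q {x. snd x \<le> b})"
    using assms(5) unfolding dist_dom_def fsd_strict1_def cdf1_def
    by (simp add: law closed_half_planes) blast
  then obtain \<eta> p q where "0 < \<eta>" "pareto_dom q p"
    and "\<And>s t. p \<in> {..s} \<times> {..t} \<Longrightarrow> q \<notin> {..s} \<times> {..t} \<Longrightarrow>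
      measure P ({..s} \<times> {..t}) + \<eta> \<le> measure Q ({..s} \<times> {..t})"
    using strict_marginal_slack_fst[OF P Q] strict_marginal_slack_snd[OF P Q] by metis
  then have "lower_orthant_dominates (mix_point (1 / (1 + \<eta>)) P p) (mix_point (1 / (1 + \<eta>)) Q q)"
    using dom by (intro lower_orthant_dominates_mix_point[OF P Q] orthant_mass_le_of_slack) auto
  moreover have "0 < 1 / (1 + \<eta>)" "1 / (1 + \<eta>) < 1" using \<open>0 < \<eta>\<close> by auto
  ultimately show ?thesis using that \<open>pareto_dom q p\<close> unfolding P_def Q_def by blast
qed

lemma submodular_utility_if_mixed_partial_nonpos:
  assumes si: "strictly_increasing2 u" and "mixed_partial_nonpos u"
  obtains u2 where "submodular_utility u u2"
proof -
  obtain u2 u12 where d2: "\<And>s t. ((\<lambda>t. u (s, t)) has_real_derivative u2 s t) (at t)"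
    and d12: "\<And>s t. ((\<lambda>s. u2 s t) has_real_derivative u12 s t) (at s)"
    and neg: "\<And>s t. u12 s t \<le> 0"
    using assms(2) unfolding mixed_partial_nonpos_def by blast
  have less: "u y < u x" if "pareto_dom x y" for x y
    using si that unfolding strictly_increasing2_def by blast
  show ?thesis
  proof (rule that, unfold_locales)
    show "u (s, t) \<le> u (s', t)" if "s \<le> s'" for s s' t
    proof (cases "s = s'")
      case False
      then show ?thesis using less[of "(s', t)" "(s, t)"] that by (simp add: pareto_dom_def)
    qed simp
    show "strict_mono (\<lambda>t. u (s, t))" for s
      by (rule strict_monoI) (rule less, simp add: pareto_dom_def)
    show "((\<lambda>t. u (s, t)) has_real_derivative u2 s t) (at t)" for s t
      by (rule d2)
    show "u2 s' t \<le> u2 s t" if "s \<le> s'" for s s' t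
      using d12 neg by (intro DERIV_nonpos_imp_nonincreasing[OF that]) blast
  qed
qed

theorem theorem3p2:
  fixes M :: "'a measure" and N :: "'b measure"
    and X :: "'a \<Rightarrow> real \<times> real" and Y :: "'b \<Rightarrow> real \<times> real"
    and u :: "real \<times> real \<Rightarrow> real"
  assumes "prob_space M" and "prob_space N"
    and "X \<in> borel_measurable M" and "Y \<in> borel_measurable N"
    and "dist_dom M X N Y"
    and "strictly_increasing2 u"
    and "mixed_partial_nonpos u"
    and "integrable M (\<lambda>\<omega>. u (X \<omega>))" and "integrable N (\<lambda>\<omega>. u (Y \<omega>))"
  shows "(\<integral>\<omega>. u (X \<omega>) \<partial>M) > (\<integral>\<omega>. u (Y \<omega>) \<partial>N)"
proof -
  obtain u2 where "submodular_utility u u2"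
    using assms(6,7) by (rule submodular_utility_if_mixed_partial_nonpos)
  then interpret submodular_utility u u2 .
  have u: "u \<in> borel_measurable borel"
    using borel_measurable_u by (simp only: borel_prod)
  have P: "prob_space (distr M borel X)" "sets (distr M borel X) = sets borel" "integrable (distr M borel X) u"
    using assms(1,3,8) u by (simp_all add: prob_space.prob_space_distr integrable_distr_eq)
  have Q: "prob_space (distr N borel Y)" "sets (distr N borel Y) = sets borel" "integrable (distr N borel Y) u"
    using assms(2,4,9) u by (simp_all add: prob_space.prob_space_distr integrable_distr_eq)
  obtain \<theta> p q where \<theta>: "0 < \<theta>" "\<theta> < 1" and "pareto_dom q p"
    and "lower_orthant_dominates (mix_point \<theta> (distr M borel X) p) (mix_point \<theta> (distr N borel Y) q)"
    using dist_dom_mix_point_dominates[OF assms(1-5)] by blast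
  then have "\<theta> * (\<integral>x. u x \<partial>distr N borel Y) + (1 - \<theta>) * u q
      \<le> \<theta> * (\<integral>x. u x \<partial>distr M borel X) + (1 - \<theta>) * u p"
    by (intro integral_mix_point_le[OF P Q]) auto
  moreover have "u p < u q"
    using assms(6) \<open>pareto_dom q p\<close> unfolding strictly_increasing2_def by blast
  then have "(1 - \<theta>) * u p < (1 - \<theta>) * u q"
    using \<theta> by simp
  ultimately have "\<theta> * (\<integral>x. u x \<partial>distr N borel Y) < \<theta> * (\<integral>x. u x \<partial>distr M borel X)"
    by linarith
  then show ?thesis
    using \<theta>(1) assms(3,4) u by (simp add: integral_distr)
qed

end
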